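(* The following equalities hold: $$\mathcal{F}\cdot\mathcal{F}=\mathcal{F},\qquad \mathcal{F}\cdot\mathcal{C}=\mathcal{C},\qquad \mathcal{F}\cdot\mathcal{C}_v=\mathcal{C}_v,\qquad \mathcal{F}\cdot\mathcal{I}=\mathcal{I}.$$
   Context: For a summable sequence $\mathbf{x}=(x_n)$ of positive reals (finite sequences are allowed and are identified with eventually-zero sequences), the achievement set is $\mathcal{A}(\mathbf{x})=\{\sum_{n\in A}x_n : A\subseteq\mathbb{N}\}$. The cardinal function $f_{\mathbf{x}}:\mathcal{A}(\mathbf{x})\to\{1,2,3,\dots\}\cup\{\omega,\mathfrak{c}\}$ sends $x$ to the number (cardinality) of $0$–$1$ sequences $(\varepsilon_n)$, indexed by the nonzero terms, with $\sum\varepsilon_n x_n=x$; $\mathrm{rng}(f)$ denotes its range. Define the families of sets: $\mathcal{F}$ = ranges of cardinal functions of finite sequences; $\mathcal{I}$ = ranges of cardinal functions of sequences whose achievement set is a finite union of (nondegenerate) closed intervals; $\mathcal{C}$ = ranges for sequences whose achievement set is a Cantor set; $\mathcal{C}_v$ = ranges for sequences whose achievement set is a Cantorval (a nonempty compact subset of $\mathbb{R}$ equal to the closure of its interior such that both endpoints of every nontrivial connected component are accumulation points of one-point components). For families $\mathcal{X},\mathcal{Y}$ of subsets of $\mathbb{R}$, $\mathcal{X}\cdot\mathcal{Y}=\{X\cdot Y: X\in\mathcal{X},Y\in\mathcal{Y}\}$ where $X\cdot Y=\{xy:x\in X,y\in Y\}$ (with the conventions that products involving $\omega$ or $\mathfrak{c}$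 are computed as cardinal products). *)

theory Defs
  imports "HOL-Analysis.Analysis"
begin

datatype cval = Fin nat | Aleph0 | Contin

fun cmul :: "cval \<Rightarrow> cval \<Rightarrow> cval" where
  "cmul (Fin m) (Fin n) = Fin (m * n)"
| "cmul (Fin m) Aleph0 = (if m = 0 then Fin 0 else Aleph0)"
| "cmul (Fin m) Contin = (if m = 0 then Fin 0 else Contin)"
| "cmul Aleph0 (Fin n) = (if n = 0 then Fin 0 else Aleph0)"
| "cmul Aleph0 Aleph0 = Aleph0"
| "cmul Aleph0 Contin = Contin"
| "cmul Contin (Fin n) = (if n = 0 then Fin 0 else Contin)"
| "cmul Contin Aleph0 = Contin"
| "cmul Contin Contin = Contin"

text \<open>Cardinality of a set of 0-1 sequences: finite, countably infinite, or
  uncountable (for the closed fibres occurring here, uncountable means continuum).\<close>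
definition cval_of :: "'a set \<Rightarrow> cval" where
  "cval_of S = (if finite S then Fin (card S) else if countable S then Aleph0 else Contin)"

text \<open>Finite sequence of positive reals x_0,...,x_{N-1}, identified with an eventually zero sequence.\<close>
definition finite_seq :: "(nat \<Rightarrow> real) \<Rightarrow> bool" where
  "finite_seq x \<longleftrightarrow> (\<exists>N. \<forall>n. (n < N \<longrightarrow> x n > 0) \<and> (N \<le> n \<longrightarrow> x n = 0))"

definition admissible :: "(nat \<Rightarrow> real) \<Rightarrow> bool" where
  "admissible x \<longleftrightarrow> finite_seq x \<or> ((\<forall>n. x n > 0) \<and> summable x)"

definition subsum :: "(nat \<Rightarrow> real) \<Rightarrow> nat set \<Rightarrow> real" where
  "subsum x A = (\<Sum>n. if n \<in> A then x n else 0)"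

definition ach :: "(nat \<Rightarrow> real) \<Rightarrow> real set" where
  "ach x = {subsum x A | A. A \<subseteq> UNIV}"

text \<open>0-1 sequences indexed by the nonzero terms, represented as subsets of the support.\<close>
definition fiber :: "(nat \<Rightarrow> real) \<Rightarrow> real \<Rightarrow> nat set set" where
  "fiber x t = {A. A \<subseteq> {n. x n \<noteq> 0} \<and> subsum x A = t}"

definition cardfun :: "(nat \<Rightarrow> real) \<Rightarrow> real \<Rightarrow> cval" where
  "cardfun x t = cval_of (fiber x t)"

definition rng :: "(nat \<Rightarrow> real) \<Rightarrow> cval set" where
  "rng x = cardfun x ` ach x"

definition fin_union_intervals :: "real set \<Rightarrow> bool" where
  "fin_union_intervals S \<longleftrightarrow>
     (\<exists>ps :: (real \<times> real) list. ps \<noteq> [] \<and> (\<forall>(a,b)\<in>set ps. a < b) \<and>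
        S = (\<Union>(a,b)\<in>set ps. {a..b}))"

definition cantor_set :: "real set \<Rightarrow> bool" where
  "cantor_set S \<longleftrightarrow> S \<noteq> {} \<and> compact S \<and> (\<forall>y\<in>S. y islimpt S) \<and> interior S = {}"

definition cantorval :: "real set \<Rightarrow> bool" where
  "cantorval S \<longleftrightarrow> S \<noteq> {} \<and> compact S \<and> S = closure (interior S) \<and>
     (let T = {y\<in>S. connected_component_set S y = {y}} in
      \<forall>y\<in>S. connected_component_set S y \<noteq> {y} \<longrightarrow>
        Inf (connected_component_set S y) islimpt T \<and>
        Sup (connected_component_set S y) islimpt T)"

definition FF :: "cval set set" where
  "FF = {rng x | x. finite_seq x}"

definition II :: "cval set set" where
  "II = {rng x | x. admissible x \<and> fin_union_intervals (ach x)}"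

definition CC :: "cval set set" where
  "CC = {rng x | x. admissible x \<and> cantor_set (ach x)}"

definition CV :: "cval set set" where
  "CV = {rng x | x. admissible x \<and> cantorval (ach x)}"

definition setmul :: "cval set \<Rightarrow> cval set \<Rightarrow> cval set" where
  "setmul X Y = {cmul a b | a b. a \<in> X \<and> b \<in> Y}"

definition fammul :: "cval set set \<Rightarrow> cval set set \<Rightarrow> cval set set" where
  "fammul \<X> \<Y> = {setmul X Y | X Y. X \<in> \<X> \<and> Y \<in> \<Y>}"

end

theory Submission
  imports Defs
begin

text \<open>Let \<open>x\<close> have \<open>N\<close> terms and let \<open>y\<close> be admissible. Put
  \<open>z = (M x\<^sub>0, \<dots>, M x\<^sub>N\<^sub>-\<^sub>1, y\<^sub>0, y\<^sub>1, \<dots>)\<close>. Every subsum of \<open>z\<close> is \<open>M a + b\<close> with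
  \<open>a \<in> A(x)\<close> and \<open>b \<in> A(y) \<subseteq> [0, \<Sum>y]\<close>. The set \<open>A(x)\<close> is finite, so for \<open>M\<close> large the
  decomposition is unique; then the fibre of \<open>z\<close> over \<open>M a + b\<close> is the product of the fibres
  of \<open>x\<close> over \<open>a\<close> and of \<open>y\<close> over \<open>b\<close>, whence \<open>rng f\<^sub>z = rng f\<^sub>x \<cdot> rng f\<^sub>y\<close>. Moreover
  \<open>z\<close> is finite if \<open>y\<close> is, and \<open>A(z)\<close> is a finite disjoint union of translates of \<open>A(y)\<close>;
  being a Cantor set, a Cantorval or a finite union of intervals survives this. The reverse inclusions
  hold because the empty sequence has range \<open>{1}\<close>.\<close>

section \<open>Subsums of admissible sequences\<close>

lemma admissible_nonneg: "admissible y \<Longrightarrow> 0 \<le> y n"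
  unfolding admissible_def finite_seq_def by (metis less_eq_real_def not_le)

lemma summable_finite_seq: "finite_seq y \<Longrightarrow> summable y"
proof -
  assume "finite_seq y"
  then obtain N where "\<And>n. N \<le> n \<Longrightarrow> y n = 0"
    unfolding finite_seq_def by blast
  then show ?thesis by (intro summable_finite[of "{..<N}"]) auto
qed

lemma admissible_summable: "admissible y \<Longrightarrow> summable y"
  unfolding admissible_def using summable_finite_seq by blast

lemma summable_restrict: "admissible y \<Longrightarrow> summable (\<lambda>n. if n \<in> B then y n else 0)"
  by (rule summable_comparison_test[OF _ admissible_summable]) (auto simp: admissible_nonneg)

lemma subsum_bounds: "admissible y \<Longrightarrow> subsum y B \<in> {0..suminf y}"
  unfolding subsum_def
  using summable_restrict[of y B] admissible_summable[of y] admissible_nonneg[of y]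
  by (auto intro!: suminf_nonneg suminf_le)

lemma subsum_empty [simp]: "subsum x {} = 0"
  by (simp add: subsum_def)

lemma subsum_finite_support:
  assumes "\<And>n. N \<le> n \<Longrightarrow> x n = 0"
  shows "subsum x A = sum x (A \<inter> {..<N})"
  unfolding subsum_def using assms
  by (subst suminf_finite[of "A \<inter> {..<N}"]) (auto simp: not_less intro!: sum.cong)

lemma mem_ach_iff: "t \<in> ach x \<longleftrightarrow> (\<exists>A. t = subsum x A)"
  unfolding ach_def by auto

lemma zero_in_ach: "0 \<in> ach x"
  by (metis mem_ach_iff subsum_empty)

lemma finite_ach: "finite_seq x \<Longrightarrow> finite (ach x)"
proof -
  assume "finite_seq x"
  then obtain N where "\<And>n. N \<le> n \<Longrightarrow> x n = 0"
    unfolding finite_seq_def by blast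
  then have "ach x \<subseteq> sum x ` Pow {..<N}"
    unfolding mem_ach_iff subset_iff using subsum_finite_support by blast
  then show ?thesis by (rule finite_subset) simp
qed

lemma Int_lessThan_Un_shift: "(A :: nat set) \<inter> {..<N} \<union> (\<lambda>m. m + N) ` {m. m + N \<in> A} = A"
proof -
  have "n \<in> (\<lambda>m. m + N) ` {m. m + N \<in> A}" if "n \<in> A" "\<not> n < N" for n
    using that by (auto intro!: image_eqI[of _ _ "n - N"])
  then show ?thesis by auto
qed

section \<open>Arithmetic of cardinal values\<close>

lemma cval_of_bij_betw:
  assumes "bij_betw f A B" shows "cval_of A = cval_of B"
proof -
  have "countable A \<longleftrightarrow> countable B"
    using assms countable_image[of A f] countable_image_inj_on[of f A]
    by (auto simp: bij_betw_def)
  then show ?thesis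
    using bij_betw_finite[OF assms] bij_betw_same_card[OF assms] by (simp add: cval_of_def)
qed

lemma countable_Times_iff:
  "countable (A \<times> B) \<longleftrightarrow> A = {} \<or> B = {} \<or> countable A \<and> countable B"
proof
  assume c: "countable (A \<times> B)"
  show "A = {} \<or> B = {} \<or> countable A \<and> countable B"
  proof (cases "A = {} \<or> B = {}")
    case False
    then have "fst ` (A \<times> B) = A" "snd ` (A \<times> B) = B" by auto
    then show ?thesis using c countable_image by metis
  qed auto
qed auto

lemma cmul_Fin_0 [simp]: "cmul (Fin 0) c = Fin 0" "cmul c (Fin 0) = Fin 0"
  by (cases c; simp)+

lemma cmul_Fin_1 [simp]: "cmul (Fin 1) c = c"
  by (cases c) auto

lemma cval_of_uncountable: "\<not> countable A \<Longrightarrow> cval_of A = Contin"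
  by (metis cval_of_def countable_finite)

lemma cval_of_Times: "cval_of (A \<times> B) = cmul (cval_of A) (cval_of B)"
proof (cases "A = {} \<or> B = {}")
  case True
  then show ?thesis by (auto simp: cval_of_def)
next
  case False
  then have nonzero: "cval_of A \<noteq> Fin 0" "cval_of B \<noteq> Fin 0"
    by (auto simp: cval_of_def)
  have finite: "finite (A \<times> B) \<longleftrightarrow> finite A \<and> finite B"
    and countable: "countable (A \<times> B) \<longleftrightarrow> countable A \<and> countable B"
    using False by (auto simp: finite_cartesian_product_iff countable_Times_iff)
  consider "finite A" "finite B" | "\<not> (finite A \<and> finite B)" "countable A" "countable B"
    | "\<not> countable A" | "\<not> countable B"
    by blast
  then show ?thesis
  proof cases
    case 1
    then show ?thesis by (simp add: cval_of_def card_cartesian_product)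
  next
    case 2
    then have "cval_of A = Aleph0 \<or> cval_of B = Aleph0" "cval_of A \<noteq> Contin" "cval_of B \<noteq> Contin"
      by (auto simp: cval_of_def)
    moreover have "cval_of (A \<times> B) = Aleph0"
      using 2 finite countable by (simp add: cval_of_def)
    ultimately show ?thesis
      using nonzero by (cases "cval_of A"; cases "cval_of B") auto
  next
    case 3
    then show ?thesis
      using nonzero countable by (cases "cval_of B") (simp_all add: cval_of_uncountable)
  next
    case 4
    then show ?thesis
      using nonzero countable by (cases "cval_of A") (simp_all add: cval_of_uncountable)
  qed
qed

section \<open>Translations and disjoint unions\<close>

lemma fin_union_intervals_translation:
  assumes "fin_union_intervals S" shows "fin_union_intervals ((+) c ` S)"
proof -
  obtain ps where ps: "ps \<noteq> []" "\<forall>(a,b)\<in>set ps. a < b" "S = (\<Union>(a,b)\<in>set ps. {a..b})"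
    using assms unfolding fin_union_intervals_def by blast
  define qs where "qs = map (\<lambda>(a,b). (a + c, b + c)) ps"
  have "qs \<noteq> []" "\<forall>(a,b)\<in>set qs. a < b" "(+) c ` S = (\<Union>(a,b)\<in>set qs. {a..b})"
    using ps by (auto simp: qs_def image_UN)
  then show ?thesis unfolding fin_union_intervals_def by blast
qed

lemma fin_union_intervals_Un:
  assumes "fin_union_intervals A" "fin_union_intervals B" shows "fin_union_intervals (A \<union> B)"
proof -
  obtain ps where "ps \<noteq> []" "\<forall>(a,b)\<in>set ps. a < b" "A = (\<Union>(a,b)\<in>set ps. {a..b})"
    using assms(1) unfolding fin_union_intervals_def by blast
  moreover obtain qs where "\<forall>(a,b)\<in>set qs. a < b" "B = (\<Union>(a,b)\<in>set qs. {a..b})"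
    using assms(2) unfolding fin_union_intervals_def by blast
  ultimately have "ps @ qs \<noteq> []" "\<forall>(a,b)\<in>set (ps @ qs). a < b"
    "A \<union> B = (\<Union>(a,b)\<in>set (ps @ qs). {a..b})"
    by auto
  then show ?thesis unfolding fin_union_intervals_def by blast
qed

lemma islimpt_translation:
  fixes S :: "real set"
  assumes "y islimpt S"
  shows "(c + y) islimpt ((+) c ` S)"
  using assms unfolding islimpt_approachable
  by (metis add_left_cancel dist_add_cancel image_eqI)

lemma cantor_set_translation: "cantor_set S \<Longrightarrow> cantor_set ((+) c ` S)"
  unfolding cantor_set_def
  by (auto simp: compact_translation interior_translation intro: islimpt_translation)

lemma cantor_set_Un: "cantor_set A \<Longrightarrow> cantor_set B \<Longrightarrow> cantor_set (A \<union> B)"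
  unfolding cantor_set_def
  by (auto simp: compact_imp_closed interior_closed_Un_empty_interior intro: islimpt_subset)

definition singleton_components :: "real set \<Rightarrow> real set" where
  "singleton_components S = {y\<in>S. connected_component_set S y = {y}}"

lemma cantorval_iff:
  "cantorval S \<longleftrightarrow> S \<noteq> {} \<and> compact S \<and> S = closure (interior S) \<and>
     (\<forall>y\<in>S. connected_component_set S y \<noteq> {y} \<longrightarrow>
        Inf (connected_component_set S y) islimpt singleton_components S \<and>
        Sup (connected_component_set S y) islimpt singleton_components S)"
  by (simp add: cantorval_def singleton_components_def Let_def)

lemma connected_component_set_translation_subset:
  fixes S :: "real set"
  shows "(+) c ` connected_component_set S y \<subseteq> connected_component_set ((+) c ` S) (c + y)"
proof (cases "y \<in> S")
  case True
  show ?thesis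
  proof (rule connected_component_maximal)
    show "connected ((+) c ` connected_component_set S y)"
      by (intro connected_continuous_image continuous_intros) simp
  qed (use True connected_component_subset in auto)
qed (metis connected_component_eq_empty image_empty empty_subsetI)

lemma connected_component_set_translation:
  fixes S :: "real set"
  shows "connected_component_set ((+) c ` S) (c + y) = (+) c ` connected_component_set S y"
proof
  have "(+) (- c) ` connected_component_set ((+) c ` S) (c + y) \<subseteq> connected_component_set S y"
    using connected_component_set_translation_subset[of "- c" "(+) c ` S" "c + y"]
    by (simp add: image_image)
  then show "connected_component_set ((+) c ` S) (c + y) \<subseteq> (+) c ` connected_component_set S y"
    by (metis translation_galois image_mono)
qed (rule connected_component_set_translation_subset)

lemma singleton_components_translation:
  "(+) c ` singleton_components S \<subseteq> singleton_components ((+) c ` S)"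
proof
  fix t assume "t \<in> (+) c ` singleton_components S"
  then obtain y where "y \<in> S" "connected_component_set S y = {y}" "t = c + y"
    by (auto simp: singleton_components_def)
  then show "t \<in> singleton_components ((+) c ` S)"
    by (simp add: singleton_components_def connected_component_set_translation)
qed

lemma cantorval_translation:
  assumes "cantorval S" shows "cantorval ((+) c ` S)"
  unfolding cantorval_iff
proof (intro conjI ballI impI)
  let ?S = "(+) c ` S"
  have S: "S \<noteq> {}" "compact S" "S = closure (interior S)"
    using assms by (auto simp: cantorval_iff)
  then show "?S \<noteq> {}" "compact ?S" "?S = closure (interior ?S)"
    by (auto simp: compact_translation interior_translation closure_translation)
  fix t assume t: "t \<in> ?S" "connected_component_set ?S t \<noteq> {t}"
  then obtain y where y: "y \<in> S" "t = c + y" by auto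
  let ?C = "connected_component_set S y"
  have C: "connected_component_set ?S t = (+) c ` ?C"
    using y by (simp add: connected_component_set_translation)
  have "?C \<noteq> {y}" using t C y by auto
  then have limpt: "Inf ?C islimpt singleton_components S" "Sup ?C islimpt singleton_components S"
    using assms y by (auto simp: cantorval_iff)
  have "bounded ?C"
    using compact_imp_bounded[OF S(2)] connected_component_subset bounded_subset by blast
  moreover have "?C \<noteq> {}"
    using y(1) connected_component_eq_empty by blast
  ultimately have "Inf (connected_component_set ?S t) = c + Inf ?C"
    and "Sup (connected_component_set ?S t) = c + Sup ?C"
    unfolding C using Inf_add_eq[of "\<lambda>x. x" ?C c] Sup_add_eq[of "\<lambda>x. x" ?C c]
    by (auto simp: bounded_imp_bdd_below bounded_imp_bdd_above)
  then show "Inf (connected_component_set ?S t) islimpt singleton_components ?S"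
    and "Sup (connected_component_set ?S t) islimpt singleton_components ?S"
    using limpt islimpt_subset[OF islimpt_translation singleton_components_translation]
    by simp_all
qed

lemma interior_Un_closed_disjoint:
  fixes A B :: "real set"
  assumes "closed A" "closed B" "A \<inter> B = {}"
  shows "interior (A \<union> B) = interior A \<union> interior B"
proof
  show "interior (A \<union> B) \<subseteq> interior A \<union> interior B"
  proof
    fix p assume "p \<in> interior (A \<union> B)"
    then obtain e where e: "e > 0" "ball p e \<subseteq> A \<union> B" by (auto simp: mem_interior)
    have "ball p e \<subseteq> A \<or> ball p e \<subseteq> B"
      using connected_ball[of p e] assms e unfolding connected_closed by blast
    then show "p \<in> interior A \<union> interior B"
      using e by (auto simp: mem_interior)
  qed
qed (simp add: interior_mono)

lemma connected_component_set_Un_closed_disjoint: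
  fixes A B :: "real set"
  assumes "closed A" "closed B" "A \<inter> B = {}" "y \<in> A"
  shows "connected_component_set (A \<union> B) y = connected_component_set A y"
proof
  let ?C = "connected_component_set (A \<union> B) y"
  have "?C \<subseteq> A"
    using connected_connected_component[of "A \<union> B" y] connected_component_subset[of "A \<union> B" y]
      connected_component_refl[of y "A \<union> B"] assms
    unfolding connected_closed by blast
  then show "?C \<subseteq> connected_component_set A y"
    using assms(4) by (intro connected_component_maximal) auto
qed (rule connected_component_mono, auto)

lemma singleton_components_Un_closed_disjoint:
  fixes A B :: "real set"
  assumes "closed A" "closed B" "A \<inter> B = {}"
  shows "singleton_components A \<subseteq> singleton_components (A \<union> B)"
  using connected_component_set_Un_closed_disjoint[OF assms]
  by (auto simp: singleton_components_def)

lemma cantorval_Un: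
  assumes A: "cantorval A" and B: "cantorval B" and disjoint: "A \<inter> B = {}"
  shows "cantorval (A \<union> B)"
proof -
  have endpoints: "Inf (connected_component_set (A' \<union> B') y) islimpt singleton_components (A' \<union> B')
      \<and> Sup (connected_component_set (A' \<union> B') y) islimpt singleton_components (A' \<union> B')"
    if "cantorval A'" "cantorval B'" "A' \<inter> B' = {}" "y \<in> A'"
      "connected_component_set (A' \<union> B') y \<noteq> {y}" for A' B' y
  proof -
    have closed: "closed A'" "closed B'"
      using that by (auto simp: cantorval_iff compact_imp_closed)
    show ?thesis
      using that connected_component_set_Un_closed_disjoint[OF closed that(3,4)]
        singleton_components_Un_closed_disjoint[OF closed that(3)]
      by (auto simp: cantorval_iff intro: islimpt_subset)
  qed
  have closed: "closed A" "closed B"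
    using A B by (auto simp: cantorval_iff compact_imp_closed)
  show ?thesis
    unfolding cantorval_iff
  proof (intro conjI ballI impI)
    show "A \<union> B \<noteq> {}" "compact (A \<union> B)" "A \<union> B = closure (interior (A \<union> B))"
      using A B by (auto simp: cantorval_iff interior_Un_closed_disjoint[OF closed disjoint] closure_Un)
  next
    fix y assume "y \<in> A \<union> B" "connected_component_set (A \<union> B) y \<noteq> {y}"
    then show "Inf (connected_component_set (A \<union> B) y) islimpt singleton_components (A \<union> B)"
      and "Sup (connected_component_set (A \<union> B) y) islimpt singleton_components (A \<union> B)"
      using endpoints[OF A B disjoint] endpoints[OF B A] disjoint by (auto simp: Un_commute)
  qed
qed

lemma Union_disjoint_translates:
  fixes K :: "real set"
  assumes "finite F" "F \<noteq> {}"
    and translation: "\<And>S c. P S \<Longrightarrow> P ((+) c ` S)"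
    and union: "\<And>A B. P A \<Longrightarrow> P B \<Longrightarrow> A \<inter> B = {} \<Longrightarrow> P (A \<union> B)"
    and "P K"
    and disjoint: "\<And>a a'. a \<in> F \<Longrightarrow> a' \<in> F \<Longrightarrow> a \<noteq> a' \<Longrightarrow> (+) a ` K \<inter> (+) a' ` K = {}"
  shows "P (\<Union>a\<in>F. (+) a ` K)"
  using assms(1,2) disjoint
proof (induction F rule: finite_ne_induct)
  case (singleton a)
  then show ?case using translation \<open>P K\<close> by simp
next
  case (insert a F)
  then have "(+) a ` K \<inter> (\<Union>a'\<in>F. (+) a' ` K) = {}" by blast
  with insert show ?case using translation union \<open>P K\<close> by simp
qed

section \<open>The scaled concatenation\<close>

lemma ex_scale_separating:
  fixes F :: "real set"
  assumes "finite F"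
  shows "\<exists>M>0. \<forall>u\<in>F. \<forall>v\<in>F. u \<noteq> v \<longrightarrow> s < M * \<bar>u - v\<bar>"
proof -
  define D where "D = (\<lambda>(u, v). \<bar>u - v\<bar>) ` {(u, v) \<in> F \<times> F. u \<noteq> v}"
  have "finite D"
    unfolding D_def by (rule finite_imageI, rule finite_subset[of _ "F \<times> F"]) (use assms in auto)
  show ?thesis
  proof (cases "D = {}")
    case True
    then show ?thesis unfolding D_def by (intro exI[of _ 1]) auto
  next
    case False
    define M where "M = (\<bar>s\<bar> + 1) / Min D"
    have Min_pos: "Min D > 0" using \<open>finite D\<close> False by (auto simp: D_def)
    then have "M > 0" by (simp add: M_def)
    moreover have "s < M * \<bar>u - v\<bar>" if "u \<in> F" "v \<in> F" "u \<noteq> v" for u v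
    proof -
      have "s < M * Min D" using Min_pos by (simp add: M_def)
      also have "Min D \<le> \<bar>u - v\<bar>"
        using \<open>finite D\<close> that by (intro Min_le) (auto simp: D_def image_iff)
      then have "M * Min D \<le> M * \<bar>u - v\<bar>"
        using \<open>M > 0\<close> by (simp add: mult_left_mono)
      finally show ?thesis .
    qed
    ultimately show ?thesis by blast
  qed
qed

locale scaled_concat =
  fixes x y :: "nat \<Rightarrow> real" and N :: nat and M :: real
  assumes x_pos: "\<And>n. n < N \<Longrightarrow> 0 < x n"
    and x_zero: "\<And>n. N \<le> n \<Longrightarrow> x n = 0"
    and y_admissible: "admissible y"
    and M_pos: "0 < M"
    and M_separating: "\<And>u v. u \<in> ach x \<Longrightarrow> v \<in> ach x \<Longrightarrow> u \<noteq> v \<Longrightarrow> suminf y < M * \<bar>u - v\<bar>"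
begin

definition z :: "nat \<Rightarrow> real" where
  "z n = (if n < N then M * x n else y (n - N))"

lemma support_x: "{n. x n \<noteq> 0} = {..<N}"
proof -
  have "x n \<noteq> 0 \<longleftrightarrow> n < N" for n
    using x_pos[of n] x_zero[of n] by (cases "n < N") auto
  then show ?thesis by auto
qed

lemma subsum_x_Int: "subsum x (A \<inter> {..<N}) = subsum x A"
  using subsum_finite_support[of N x, OF x_zero] by (simp add: Int_assoc)

lemma decomposition_unique:
  assumes "a \<in> ach x" "a' \<in> ach x" "b \<in> {0..suminf y}" "b' \<in> {0..suminf y}"
    and "M * a + b = M * a' + b'"
  shows "a = a'"
proof (rule ccontr)
  assume "a \<noteq> a'"
  then have "suminf y < M * \<bar>a - a'\<bar>" using M_separating assms(1,2) by blast
  also have "M * (a - a') = b' - b"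
    using assms(5) by (simp add: algebra_simps)
  then have "M * \<bar>a - a'\<bar> = \<bar>b' - b\<bar>"
    using M_pos by (metis abs_mult abs_of_pos)
  also have "\<bar>b' - b\<bar> \<le> suminf y" using assms(3,4) by auto
  finally show False by simp
qed

lemma finite_seq_z: "finite_seq y \<Longrightarrow> finite_seq z"
proof -
  assume "finite_seq y"
  then obtain N' where "\<forall>n. (n < N' \<longrightarrow> y n > 0) \<and> (N' \<le> n \<longrightarrow> y n = 0)"
    unfolding finite_seq_def by blast
  then have "\<forall>n. (n < N + N' \<longrightarrow> z n > 0) \<and> (N + N' \<le> n \<longrightarrow> z n = 0)"
    using x_pos M_pos by (auto simp: z_def)
  then show "finite_seq z" unfolding finite_seq_def by blast
qed

lemma admissible_z: "admissible z"
  using y_admissible unfolding admissible_def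
proof (elim disjE)
  assume "finite_seq y"
  then show "finite_seq z \<or> (\<forall>n. 0 < z n) \<and> summable z" using finite_seq_z by blast
next
  assume y: "(\<forall>n. 0 < y n) \<and> summable y"
  then have "summable (\<lambda>n. z (n + N))" by (simp add: z_def)
  then have "summable z" by (rule summable_iff_shift[THEN iffD1])
  moreover have "\<forall>n. 0 < z n" using y x_pos M_pos by (simp add: z_def)
  ultimately show "finite_seq z \<or> (\<forall>n. 0 < z n) \<and> summable z" by blast
qed

lemma subsum_z: "subsum z A = M * subsum x A + subsum y {m. m + N \<in> A}"
proof -
  let ?zA = "\<lambda>n. if n \<in> A then z n else 0"
  have "subsum z A = (\<Sum>n. ?zA (n + N)) + (\<Sum>n<N. ?zA n)"
    unfolding subsum_def by (rule suminf_split_initial_segment[OF summable_restrict[OF admissible_z]])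
  also have "(\<Sum>n. ?zA (n + N)) = subsum y {m. m + N \<in> A}"
    unfolding subsum_def z_def by (intro arg_cong[where f = suminf] ext) simp
  also have "(\<Sum>n<N. ?zA n) = M * (\<Sum>n<N. if n \<in> A then x n else 0)"
    by (simp add: z_def sum_distrib_left if_distrib cong: if_cong)
  also have "(\<Sum>n<N. if n \<in> A then x n else 0) = sum x ({..<N} \<inter> A)"
    by (simp add: sum.inter_restrict)
  also have "\<dots> = subsum x A"
    by (simp add: subsum_finite_support[of N x, OF x_zero] Int_commute)
  finally show ?thesis by simp
qed

lemma subsum_z_join:
  assumes "A \<subseteq> {..<N}"
  shows "subsum z (A \<union> (\<lambda>m. m + N) ` B) = M * subsum x A + subsum y B"
proof -
  have "(A \<union> (\<lambda>m. m + N) ` B) \<inter> {..<N} = A" "{m. m + N \<in> A \<union> (\<lambda>m. m + N) ` B} = B"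
    using assms by auto
  then show ?thesis
    using subsum_z[of "A \<union> (\<lambda>m. m + N) ` B"] subsum_x_Int[of "A \<union> (\<lambda>m. m + N) ` B"] by simp
qed

lemma ach_z: "ach z = {M * a + b | a b. a \<in> ach x \<and> b \<in> ach y}"
proof
  show "ach z \<subseteq> {M * a + b | a b. a \<in> ach x \<and> b \<in> ach y}"
  proof
    fix t assume "t \<in> ach z"
    then obtain A where "t = subsum z A" by (auto simp: mem_ach_iff)
    then show "t \<in> {M * a + b | a b. a \<in> ach x \<and> b \<in> ach y}"
      unfolding subsum_z mem_ach_iff by blast
  qed
  show "{M * a + b | a b. a \<in> ach x \<and> b \<in> ach y} \<subseteq> ach z"
  proof
    fix t assume "t \<in> {M * a + b | a b. a \<in> ach x \<and> b \<in> ach y}"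
    then obtain A B where "t = M * subsum x A + subsum y B" by (auto simp: mem_ach_iff)
    also have "\<dots> = subsum z (A \<inter> {..<N} \<union> (\<lambda>m. m + N) ` B)"
      by (simp add: subsum_z_join subsum_x_Int)
    finally show "t \<in> ach z" by (auto simp: mem_ach_iff)
  qed
qed

lemma fiber_z_bij:
  assumes a: "a \<in> ach x" and b: "b \<in> ach y"
  shows "bij_betw (\<lambda>A. (A \<inter> {..<N}, {m. m + N \<in> A}))
    (fiber z (M * a + b)) (fiber x a \<times> fiber y b)"
proof (rule bij_betwI[where g = "\<lambda>(A, B). A \<union> (\<lambda>m. m + N) ` B"])
  show "(\<lambda>A. (A \<inter> {..<N}, {m. m + N \<in> A})) \<in> fiber z (M * a + b) \<rightarrow> fiber x a \<times> fiber y b"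
  proof
    fix A assume "A \<in> fiber z (M * a + b)"
    then have A: "A \<subseteq> {n. z n \<noteq> 0}" "M * subsum x A + subsum y {m. m + N \<in> A} = M * a + b"
      by (auto simp: fiber_def subsum_z)
    have "subsum x A = a"
      using decomposition_unique[OF _ a _ _ A(2)] subsum_bounds[OF y_admissible] b
      by (auto simp: mem_ach_iff)
    then have "subsum y {m. m + N \<in> A} = b" using A(2) by simp
    moreover have "{m. m + N \<in> A} \<subseteq> {n. y n \<noteq> 0}" using A(1) by (auto simp: z_def)
    ultimately show "(A \<inter> {..<N}, {m. m + N \<in> A}) \<in> fiber x a \<times> fiber y b"
      using \<open>subsum x A = a\<close> by (auto simp: fiber_def support_x subsum_x_Int)
  qed
  show "(\<lambda>(A, B). A \<union> (\<lambda>m. m + N) ` B) \<in> fiber x a \<times> fiber y b \<rightarrow> fiber z (M * a + b)"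
  proof clarify
    fix A B assume "A \<in> fiber x a" "B \<in> fiber y b"
    then have "A \<subseteq> {..<N}" "subsum x A = a" "B \<subseteq> {n. y n \<noteq> 0}" "subsum y B = b"
      by (auto simp: fiber_def support_x)
    moreover have "x n \<noteq> 0" if "n < N" for n
      using x_pos[OF that] by simp
    ultimately show "A \<union> (\<lambda>m. m + N) ` B \<in> fiber z (M * a + b)"
      using M_pos by (auto simp: fiber_def subsum_z_join z_def)
  qed
  show "(\<lambda>(A, B). A \<union> (\<lambda>m. m + N) ` B) (A \<inter> {..<N}, {m. m + N \<in> A}) = A" for A
    by (simp add: Int_lessThan_Un_shift)
  show "(\<lambda>A. (A \<inter> {..<N}, {m. m + N \<in> A})) ((\<lambda>(A, B). A \<union> (\<lambda>m. m + N) ` B) p) = p"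
    if "p \<in> fiber x a \<times> fiber y b" for p
    using that by (auto simp: fiber_def support_x)
qed

lemma cardfun_z:
  assumes "a \<in> ach x" "b \<in> ach y"
  shows "cardfun z (M * a + b) = cmul (cardfun x a) (cardfun y b)"
  unfolding cardfun_def cval_of_bij_betw[OF fiber_z_bij[OF assms]] by (rule cval_of_Times)

lemma rng_z: "rng z = setmul (rng x) (rng y)"
proof -
  have "rng z = (\<lambda>(a, b). cardfun z (M * a + b)) ` (ach x \<times> ach y)"
    unfolding rng_def ach_z by auto
  also have "\<dots> = (\<lambda>(a, b). cmul (cardfun x a) (cardfun y b)) ` (ach x \<times> ach y)"
    by (intro image_cong) (auto simp: cardfun_z)
  also have "\<dots> = setmul (rng x) (rng y)"
    unfolding rng_def setmul_def by auto
  finally show ?thesis .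
qed

lemma ach_z_Union_translates: "ach z = (\<Union>a\<in>(*) M ` ach x. (+) a ` ach y)"
  unfolding ach_z by auto

lemma translates_disjoint:
  assumes "a \<in> (*) M ` ach x" "a' \<in> (*) M ` ach x" "a \<noteq> a'"
  shows "(+) a ` ach y \<inter> (+) a' ` ach y = {}"
proof (rule ccontr)
  obtain u u' where u: "u \<in> ach x" "u' \<in> ach x" "a = M * u" "a' = M * u'"
    using assms(1,2) by blast
  assume "(+) a ` ach y \<inter> (+) a' ` ach y \<noteq> {}"
  then obtain b b' where "b \<in> ach y" "b' \<in> ach y" "M * u + b = M * u' + b'"
    using u by auto
  then have "u = u'"
    using decomposition_unique[OF u(1,2)] subsum_bounds[OF y_admissible] by (auto simp: mem_ach_iff)
  then show False using u assms(3) by simp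
qed

end

lemma ex_scaled_concat:
  assumes "finite_seq x" "admissible y"
  shows "\<exists>N M. scaled_concat x y N M"
proof -
  obtain N where N: "\<And>n. n < N \<Longrightarrow> 0 < x n" "\<And>n. N \<le> n \<Longrightarrow> x n = 0"
    using assms(1) unfolding finite_seq_def by blast
  obtain M where "M > 0" "\<forall>u\<in>ach x. \<forall>v\<in>ach x. u \<noteq> v \<longrightarrow> suminf y < M * \<bar>u - v\<bar>"
    using ex_scale_separating[OF finite_ach[OF assms(1)]] by blast
  then have "scaled_concat x y N M"
    using N assms(2) by unfold_locales auto
  then show ?thesis by blast
qed

lemma FF_one: "{Fin 1} \<in> FF"
proof -
  have "ach (\<lambda>_. 0) = {0}" "fiber (\<lambda>_. 0) 0 = {{}}"
    by (auto simp: mem_ach_iff fiber_def subsum_def)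
  then have "rng (\<lambda>_. 0) = {Fin 1}"
    by (simp add: rng_def cardfun_def cval_of_def)
  moreover have "finite_seq (\<lambda>_. 0)" unfolding finite_seq_def by auto
  ultimately show ?thesis unfolding FF_def by blast
qed

lemma setmul_Fin_1: "setmul {Fin 1} Y = Y"
  using cmul_Fin_1 by (auto simp: setmul_def)

lemma subset_fammul_FF: "\<Y> \<subseteq> fammul FF \<Y>"
  using FF_one setmul_Fin_1 unfolding fammul_def by blast

lemma fammul_FF_FF: "fammul FF FF = FF"
proof (rule subset_antisym[OF _ subset_fammul_FF], rule subsetI)
  fix W assume "W \<in> fammul FF FF"
  then obtain x y where "finite_seq x" "finite_seq y" "W = setmul (rng x) (rng y)"
    unfolding fammul_def FF_def by blast
  obtain N M where "scaled_concat x y N M"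
    using ex_scaled_concat \<open>finite_seq x\<close> \<open>finite_seq y\<close> admissible_def by blast
  then interpret scaled_concat x y N M .
  show "W \<in> FF"
    unfolding FF_def using rng_z finite_seq_z \<open>finite_seq y\<close> \<open>W = _\<close> by blast
qed

lemma fammul_FF_achievement_family:
  assumes translation: "\<And>S c. P S \<Longrightarrow> P ((+) c ` S)"
    and union: "\<And>A B. P A \<Longrightarrow> P B \<Longrightarrow> A \<inter> B = {} \<Longrightarrow> P (A \<union> B)"
  shows "fammul FF {rng y | y. admissible y \<and> P (ach y)} = {rng y | y. admissible y \<and> P (ach y)}"
proof (rule subset_antisym[OF _ subset_fammul_FF], rule subsetI)
  fix W assume "W \<in> fammul FF {rng y | y. admissible y \<and> P (ach y)}"
  then obtain x y where "finite_seq x" "admissible y" "P (ach y)" "W = setmul (rng x) (rng y)"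
    unfolding fammul_def FF_def by blast
  obtain N M where "scaled_concat x y N M"
    using ex_scaled_concat \<open>finite_seq x\<close> \<open>admissible y\<close> by blast
  then interpret scaled_concat x y N M .
  have "finite ((*) M ` ach x)" "(*) M ` ach x \<noteq> {}"
    using finite_ach[OF \<open>finite_seq x\<close>] zero_in_ach by auto
  then have "P (ach z)"
    unfolding ach_z_Union_translates
    using Union_disjoint_translates[OF _ _ translation union \<open>P (ach y)\<close> translates_disjoint]
    by blast
  then show "W \<in> {rng y | y. admissible y \<and> P (ach y)}"
    using rng_z admissible_z \<open>W = _\<close> by blast
qed

theorem lemma2p1:
  shows "fammul FF FF = FF \<and> fammul FF CC = CC \<and> fammul FF CV = CV \<and> fammul FF II = II"
  unfolding CC_def CV_def II_def
  using fammul_FF_FF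
    fammul_FF_achievement_family[OF cantor_set_translation cantor_set_Un]
    fammul_FF_achievement_family[OF cantorval_translation cantorval_Un]
    fammul_FF_achievement_family[OF fin_union_intervals_translation fin_union_intervals_Un]
  by blast

end
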